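(* Let $I$ be an ideal of a ring $R$. The following are equivalent: (1) $R$ is uniquely weakly $I$-clean; (2) $R/I$ is semi Boolean and idempotents can be lifted uniquely weakly modulo $I$; (3) $R/I$ is semi Boolean, idempotents can be lifted weakly modulo $I$, $R$ is abelian, and $I$ is idempotent free; (4) for each $a\in R$ there exists a central idempotent $e\in R$ such that $a-e\in I$ or $a+e\in I$, and $I$ is idempotent free.
   Context: All rings are associative with identity; $Idem(R)$ is the set of idempotents. $R$ is uniquely weakly $I$-clean if for every $x\in R$ there exists a unique $e\in Idem(R)$ with $x-e\in I$ or $x+e\in I$. A ring $A$ is semi Boolean if for every $x\in A$, $x^2=x$ or $x^2=-x$. Idempotents can be lifted weakly modulo $I$ if for every $x\in R$ with $x^2-x\in I$ there is $e\in Idem(R)$ with $x-e\in I$ or $x+e\in I$; lifted uniquely weakly if such $e$ is moreover unique. An ideal is idempotent free if the only idempotent it contains is $0$. $R$ is abelian if all idempotents are central. *)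

theory Defs
  imports "HOL-Algebra.QuotRing"
begin

definition Idems :: "('a, 'b) ring_scheme \<Rightarrow> 'a set" where
  "Idems R = {e \<in> carrier R. e \<otimes>\<^bsub>R\<^esub> e = e}"

definition uniquely_weakly_clean :: "('a, 'b) ring_scheme \<Rightarrow> 'a set \<Rightarrow> bool" where
  "uniquely_weakly_clean R I \<longleftrightarrow>
     (\<forall>x \<in> carrier R. \<exists>!e. e \<in> Idems R \<and> (x \<ominus>\<^bsub>R\<^esub> e \<in> I \<or> x \<oplus>\<^bsub>R\<^esub> e \<in> I))"

definition semi_boolean :: "('a, 'b) ring_scheme \<Rightarrow> bool" where
  "semi_boolean A \<longleftrightarrow>
     (\<forall>x \<in> carrier A. x \<otimes>\<^bsub>A\<^esub> x = x \<or> x \<otimes>\<^bsub>A\<^esub> x = \<ominus>\<^bsub>A\<^esub> x)"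

definition idem_lift_weakly :: "('a, 'b) ring_scheme \<Rightarrow> 'a set \<Rightarrow> bool" where
  "idem_lift_weakly R I \<longleftrightarrow>
     (\<forall>x \<in> carrier R. x \<otimes>\<^bsub>R\<^esub> x \<ominus>\<^bsub>R\<^esub> x \<in> I \<longrightarrow>
        (\<exists>e. e \<in> Idems R \<and> (x \<ominus>\<^bsub>R\<^esub> e \<in> I \<or> x \<oplus>\<^bsub>R\<^esub> e \<in> I)))"

definition idem_lift_uniquely_weakly :: "('a, 'b) ring_scheme \<Rightarrow> 'a set \<Rightarrow> bool" where
  "idem_lift_uniquely_weakly R I \<longleftrightarrow>
     (\<forall>x \<in> carrier R. x \<otimes>\<^bsub>R\<^esub> x \<ominus>\<^bsub>R\<^esub> x \<in> I \<longrightarrow>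
        (\<exists>!e. e \<in> Idems R \<and> (x \<ominus>\<^bsub>R\<^esub> e \<in> I \<or> x \<oplus>\<^bsub>R\<^esub> e \<in> I)))"

definition idempotent_free :: "('a, 'b) ring_scheme \<Rightarrow> 'a set \<Rightarrow> bool" where
  "idempotent_free R I \<longleftrightarrow> (\<forall>e \<in> I. e \<otimes>\<^bsub>R\<^esub> e = e \<longrightarrow> e = \<zero>\<^bsub>R\<^esub>)"

definition central :: "('a, 'b) ring_scheme \<Rightarrow> 'a \<Rightarrow> bool" where
  "central R e \<longleftrightarrow> (\<forall>x \<in> carrier R. e \<otimes>\<^bsub>R\<^esub> x = x \<otimes>\<^bsub>R\<^esub> e)"

definition abelian_ring :: "('a, 'b) ring_scheme \<Rightarrow> bool" where
  "abelian_ring R \<longleftrightarrow> (\<forall>e \<in> Idems R. central R e)"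

end

theory Submission
  imports Defs
begin

(*
  Write x ~ y for x \<equiv> \<plusminus>y (mod I). The quotient R/I is semi Boolean iff x\<^sup>2 ~ x for every x,
  and x ~ e forces x\<^sup>2 \<equiv> e\<^sup>2 = e, whence x\<^sup>2 ~ x: weakly clean rings have semi Boolean quotients.
  Uniqueness of weak lifts makes I idempotent free (0 and any idempotent of I both lift 0) and
  makes every idempotent e central: for r \<in> R the Peirce corners er - ere and re - ere square
  to zero, so they lie in I (a semi Boolean ring has no nonzero square-zero elements), and
  adding either of them to e gives an idempotent ~ e, which must be e itself. Conversely, if
  e ~ g with g central, then e - eg and g - ge are idempotents in I; when I is idempotent free
  they vanish and e = g, which is the uniqueness needed to return to weak cleanness.
*)

context ring begin

lemma diff_eq_zero_iff:
  assumes "a \<in> carrier R" "b \<in> carrier R"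
  shows "a \<ominus> b = \<zero> \<longleftrightarrow> a = b"
proof
  assume "a \<ominus> b = \<zero>"
  moreover have "a = (a \<ominus> b) \<oplus> b" using assms by algebra
  ultimately show "a = b" using assms by simp
qed (use assms in \<open>simp add: a_minus_def r_neg\<close>)

lemma idem_add_square_zero:
  assumes "e \<in> Idems R" "a \<in> carrier R" "a \<otimes> a = \<zero>" "e \<otimes> a \<oplus> a \<otimes> e = a"
  shows "e \<oplus> a \<in> Idems R"
proof -
  have "(e \<oplus> a) \<otimes> (e \<oplus> a) = e \<otimes> e \<oplus> (e \<otimes> a \<oplus> a \<otimes> e) \<oplus> a \<otimes> a"
    using assms(1,2) by (simp add: Idems_def) algebra
  with assms show ?thesis by (simp add: Idems_def)
qed

lemma corner_square_zero:
  assumes "a \<in> carrier R" "e \<in> carrier R"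
    and "e \<otimes> a = a \<and> a \<otimes> e = \<zero> \<or> e \<otimes> a = \<zero> \<and> a \<otimes> e = a"
  shows "a \<otimes> a = \<zero>"
  using assms(3)
proof (elim disjE conjE)
  assume "e \<otimes> a = a" "a \<otimes> e = \<zero>"
  then have "a \<otimes> a = a \<otimes> (e \<otimes> a)" by simp
  also have "\<dots> = (a \<otimes> e) \<otimes> a" using assms(1,2) by (simp add: m_assoc)
  also have "\<dots> = \<zero>" using \<open>a \<otimes> e = \<zero>\<close> assms(1) by simp
  finally show ?thesis .
next
  assume "e \<otimes> a = \<zero>" "a \<otimes> e = a"
  then have "a \<otimes> a = (a \<otimes> e) \<otimes> a" by simp
  also have "\<dots> = a \<otimes> (e \<otimes> a)" using assms(1,2) by (simp add: m_assoc)
  also have "\<dots> = \<zero>" using \<open>e \<otimes> a = \<zero>\<close> assms(1) by simp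
  finally show ?thesis .
qed

lemma idem_corner_mult:
  assumes "e \<in> Idems R" "r \<in> carrier R"
  shows "e \<otimes> (e \<otimes> r \<ominus> e \<otimes> r \<otimes> e) = e \<otimes> r \<ominus> e \<otimes> r \<otimes> e"
    and "(e \<otimes> r \<ominus> e \<otimes> r \<otimes> e) \<otimes> e = \<zero>"
    and "e \<otimes> (r \<otimes> e \<ominus> e \<otimes> r \<otimes> e) = \<zero>"
    and "(r \<otimes> e \<ominus> e \<otimes> r \<otimes> e) \<otimes> e = r \<otimes> e \<ominus> e \<otimes> r \<otimes> e"
proof -
  have ec: "e \<in> carrier R" and ee: "e \<otimes> e = e" using assms(1) by (simp_all add: Idems_def)
  have "e \<otimes> (e \<otimes> r \<ominus> e \<otimes> r \<otimes> e) = (e \<otimes> e) \<otimes> r \<ominus> (e \<otimes> e) \<otimes> r \<otimes> e"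
    and "(e \<otimes> r \<ominus> e \<otimes> r \<otimes> e) \<otimes> e = e \<otimes> r \<otimes> e \<ominus> e \<otimes> r \<otimes> (e \<otimes> e)"
    and "e \<otimes> (r \<otimes> e \<ominus> e \<otimes> r \<otimes> e) = e \<otimes> r \<otimes> e \<ominus> (e \<otimes> e) \<otimes> r \<otimes> e"
    and "(r \<otimes> e \<ominus> e \<otimes> r \<otimes> e) \<otimes> e = r \<otimes> (e \<otimes> e) \<ominus> e \<otimes> r \<otimes> (e \<otimes> e)"
    using ec assms(2) by algebra+
  then show "e \<otimes> (e \<otimes> r \<ominus> e \<otimes> r \<otimes> e) = e \<otimes> r \<ominus> e \<otimes> r \<otimes> e"
    and "(e \<otimes> r \<ominus> e \<otimes> r \<otimes> e) \<otimes> e = \<zero>"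
    and "e \<otimes> (r \<otimes> e \<ominus> e \<otimes> r \<otimes> e) = \<zero>"
    and "(r \<otimes> e \<ominus> e \<otimes> r \<otimes> e) \<otimes> e = r \<otimes> e \<ominus> e \<otimes> r \<otimes> e"
    unfolding ee using ec assms(2) by (simp_all add: a_minus_def r_neg)
qed

lemma idem_diff_mult_idem:
  assumes "e \<in> Idems R" "g \<in> Idems R" and comm: "e \<otimes> g = g \<otimes> e"
  shows "e \<ominus> e \<otimes> g \<in> Idems R"
proof -
  have e: "e \<in> carrier R" "e \<otimes> e = e" and g: "g \<in> carrier R" "g \<otimes> g = g"
    using assms by (simp_all add: Idems_def)
  have eeg: "e \<otimes> e \<otimes> g = e \<otimes> g" using e by simp
  have ege: "e \<otimes> g \<otimes> e = e \<otimes> g" using e g comm by (metis m_assoc)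
  have egg: "e \<otimes> g \<otimes> g = e \<otimes> g" using e g by (simp add: m_assoc)
  have "(e \<ominus> e \<otimes> g) \<otimes> (e \<ominus> e \<otimes> g) = e \<otimes> e \<ominus> e \<otimes> e \<otimes> g \<ominus> e \<otimes> g \<otimes> e \<oplus> e \<otimes> g \<otimes> e \<otimes> g"
    using e(1) g(1) by algebra
  also have "\<dots> = e \<ominus> e \<otimes> g \<ominus> e \<otimes> g \<oplus> e \<otimes> g"
    by (simp only: e(2) eeg ege egg)
  also have "\<dots> = e \<ominus> e \<otimes> g" using e(1) g(1) by algebra
  finally show ?thesis using e g by (simp add: Idems_def)
qed

end

context ideal begin

(* The disjunction x \<ominus> y \<in> I \<or> x \<oplus> y \<in> I, i.e. x \<equiv> \<plusminus>y (mod I), is called weak congruence below. *)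

lemma minus_mem: "x \<in> I \<Longrightarrow> y \<in> I \<Longrightarrow> x \<ominus> y \<in> I"
  by (simp add: a_minus_def)

lemma weak_cong_sym:
  assumes "x \<in> carrier R" "y \<in> carrier R" "x \<ominus> y \<in> I \<or> x \<oplus> y \<in> I"
  shows "y \<ominus> x \<in> I \<or> y \<oplus> x \<in> I"
proof -
  have "y \<ominus> x = \<ominus> (x \<ominus> y)" "y \<oplus> x = x \<oplus> y"
    using assms(1,2) by algebra+
  with assms(3) show ?thesis by auto
qed

lemma weak_cong_trans:
  assumes carr: "a \<in> carrier R" "b \<in> carrier R" "e \<in> carrier R"
    and "a \<ominus> e \<in> I \<or> a \<oplus> e \<in> I" and "b \<ominus> e \<in> I \<or> b \<oplus> e \<in> I"
  shows "a \<ominus> b \<in> I \<or> a \<oplus> b \<in> I"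
  using assms(4,5)
proof (elim disjE)
  assume "a \<ominus> e \<in> I" "b \<ominus> e \<in> I"
  moreover have "a \<ominus> b = (a \<ominus> e) \<ominus> (b \<ominus> e)" using carr by algebra
  ultimately show ?thesis by (simp add: minus_mem)
next
  assume "a \<ominus> e \<in> I" "b \<oplus> e \<in> I"
  moreover have "a \<oplus> b = (a \<ominus> e) \<oplus> (b \<oplus> e)" using carr by algebra
  ultimately show ?thesis by simp
next
  assume "a \<oplus> e \<in> I" "b \<ominus> e \<in> I"
  moreover have "a \<oplus> b = (a \<oplus> e) \<oplus> (b \<ominus> e)" using carr by algebra
  ultimately show ?thesis by simp
next
  assume "a \<oplus> e \<in> I" "b \<oplus> e \<in> I"
  moreover have "a \<ominus> b = (a \<oplus> e) \<ominus> (b \<oplus> e)" using carr by algebra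
  ultimately show ?thesis by (simp add: minus_mem)
qed

lemma weak_cong_uminus:
  assumes "a \<in> carrier R" "e \<in> carrier R" "\<ominus> a \<ominus> e \<in> I \<or> \<ominus> a \<oplus> e \<in> I"
  shows "a \<ominus> e \<in> I \<or> a \<oplus> e \<in> I"
proof -
  have "a \<oplus> e = \<ominus> (\<ominus> a \<ominus> e)" "a \<ominus> e = \<ominus> (\<ominus> a \<oplus> e)"
    using assms(1,2) by algebra+
  with assms(3) show ?thesis by auto
qed

lemma square_diff_mem_if_weak_cong:
  assumes carr: "x \<in> carrier R" "y \<in> carrier R" and "x \<ominus> y \<in> I \<or> x \<oplus> y \<in> I"
  shows "x \<otimes> x \<ominus> y \<otimes> y \<in> I"
  using assms(3)
proof
  assume "x \<ominus> y \<in> I"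
  moreover have "x \<otimes> x \<ominus> y \<otimes> y = x \<otimes> (x \<ominus> y) \<oplus> (x \<ominus> y) \<otimes> y" using carr by algebra
  ultimately show ?thesis using carr by (simp add: I_l_closed I_r_closed)
next
  assume "x \<oplus> y \<in> I"
  moreover have "x \<otimes> x \<ominus> y \<otimes> y = x \<otimes> (x \<oplus> y) \<ominus> (x \<oplus> y) \<otimes> y" using carr by algebra
  ultimately show ?thesis using carr by (simp add: I_l_closed I_r_closed minus_mem)
qed

lemma diff_mult_mem_if_weak_cong:
  assumes x: "x \<in> carrier R" and y: "y \<in> Idems R" and "x \<ominus> y \<in> I \<or> x \<oplus> y \<in> I"
  shows "x \<ominus> x \<otimes> y \<in> I"
proof -
  have yc: "y \<in> carrier R" and yy: "y \<otimes> y = y" using y by (simp_all add: Idems_def)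
  have closed: "z \<ominus> z \<otimes> y \<in> I" if "z \<in> I" for z
    using that yc by (simp add: minus_mem I_r_closed)
  have "(x \<ominus> y) \<ominus> (x \<ominus> y) \<otimes> y = x \<ominus> x \<otimes> y \<ominus> (y \<ominus> y \<otimes> y)"
    and "(x \<oplus> y) \<ominus> (x \<oplus> y) \<otimes> y = x \<ominus> x \<otimes> y \<oplus> (y \<ominus> y \<otimes> y)"
    using x yc by algebra+
  then have minus: "(x \<ominus> y) \<ominus> (x \<ominus> y) \<otimes> y = x \<ominus> x \<otimes> y"
    and plus: "(x \<oplus> y) \<ominus> (x \<oplus> y) \<otimes> y = x \<ominus> x \<otimes> y"
    using x yc yy by (simp_all add: a_minus_def r_neg)
  from assms(3) show ?thesis
  proof
    assume "x \<ominus> y \<in> I"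
    from closed[OF this] show ?thesis by (simp only: minus)
  next
    assume "x \<oplus> y \<in> I"
    from closed[OF this] show ?thesis by (simp only: plus)
  qed
qed

lemma semi_boolean_quotient_iff:
  "semi_boolean (R Quot I) \<longleftrightarrow> (\<forall>x \<in> carrier R. x \<otimes> x \<ominus> x \<in> I \<or> x \<otimes> x \<oplus> x \<in> I)"
proof -
  interpret h: ring_hom_ring R "R Quot I" "(+>) I" by (rule rcos_ring_hom_ring)
  have carrier: "carrier (R Quot I) = (+>) I ` carrier R"
    by (auto simp: FactRing_def A_RCOSETS_def RCOSETS_def a_r_coset_def)
  have "x \<otimes> x \<ominus> x \<in> I \<longleftrightarrow> (I +> x) \<otimes>\<^bsub>R Quot I\<^esub> (I +> x) = I +> x"
    and "x \<otimes> x \<oplus> x \<in> I \<longleftrightarrow> (I +> x) \<otimes>\<^bsub>R Quot I\<^esub> (I +> x) = \<ominus>\<^bsub>R Quot I\<^esub> (I +> x)"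
    if x: "x \<in> carrier R" for x
  proof -
    have "x \<otimes> x \<oplus> x = x \<otimes> x \<ominus> \<ominus> x" using x by algebra
    then show "x \<otimes> x \<ominus> x \<in> I \<longleftrightarrow> (I +> x) \<otimes>\<^bsub>R Quot I\<^esub> (I +> x) = I +> x"
      and "x \<otimes> x \<oplus> x \<in> I \<longleftrightarrow> (I +> x) \<otimes>\<^bsub>R Quot I\<^esub> (I +> x) = \<ominus>\<^bsub>R Quot I\<^esub> (I +> x)"
      using x quotient_eq_iff_same_a_r_cos[OF is_ideal] by simp_all
  qed
  then show ?thesis by (auto simp: semi_boolean_def carrier)
qed

lemma square_zero_mem_if_semi_boolean:
  assumes "\<forall>x \<in> carrier R. x \<otimes> x \<ominus> x \<in> I \<or> x \<otimes> x \<oplus> x \<in> I"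
    and a: "a \<in> carrier R" "a \<otimes> a = \<zero>"
  shows "a \<in> I"
proof -
  have "a \<otimes> a \<ominus> a \<in> I \<or> a \<otimes> a \<oplus> a \<in> I" using assms(1) a(1) by blast
  then have "\<ominus> a \<in> I \<or> a \<in> I" using a by (simp add: minus_eq)
  then show ?thesis using a by (metis additive_subgroup.a_inv_closed is_additive_subgroup minus_minus)
qed

lemma square_zero_eq_zero_if_unique_lift:
  assumes e: "e \<in> Idems R" and uniq: "\<And>f. f \<in> Idems R \<Longrightarrow> e \<ominus> f \<in> I \<Longrightarrow> f = e"
    and a: "a \<in> I" "a \<otimes> a = \<zero>" "e \<otimes> a \<oplus> a \<otimes> e = a"
  shows "a = \<zero>"
proof -
  have ec: "e \<in> carrier R" and ac: "a \<in> carrier R" using e a(1) Icarr by (simp_all add: Idems_def)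
  have "e \<ominus> (e \<oplus> a) = \<ominus> a" using ec ac by algebra
  with a(1) have "e \<ominus> (e \<oplus> a) \<in> I" by simp
  with idem_add_square_zero[OF e ac a(2,3)] have "e \<oplus> a = e" by (rule uniq)
  moreover have "a = (e \<oplus> a) \<ominus> e" using ec ac by algebra
  ultimately show ?thesis using ec by (simp add: a_minus_def r_neg)
qed

lemma central_if_unique_lift:
  assumes e: "e \<in> Idems R" and uniq: "\<And>f. f \<in> Idems R \<Longrightarrow> e \<ominus> f \<in> I \<Longrightarrow> f = e"
    and square_zero: "\<And>a. a \<in> carrier R \<Longrightarrow> a \<otimes> a = \<zero> \<Longrightarrow> a \<in> I"
  shows "central R e"
  unfolding central_def
proof
  fix r assume r: "r \<in> carrier R"
  have ec: "e \<in> carrier R" using e by (simp add: Idems_def)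
  have corner_zero: "a = \<zero>"
    if a: "a \<in> carrier R" and corner: "e \<otimes> a = a \<and> a \<otimes> e = \<zero> \<or> e \<otimes> a = \<zero> \<and> a \<otimes> e = a" for a
  proof (rule square_zero_eq_zero_if_unique_lift[OF e uniq])
    show "a \<otimes> a = \<zero>" using corner_square_zero[OF a ec corner] .
    then show "a \<in> I" using square_zero a by blast
    show "e \<otimes> a \<oplus> a \<otimes> e = a" using corner a ec by auto
  qed
  have "e \<otimes> r \<ominus> e \<otimes> r \<otimes> e = \<zero>"
    using ec r idem_corner_mult(1,2)[OF e r] by (intro corner_zero) simp_all
  then have left: "e \<otimes> r = e \<otimes> r \<otimes> e" using ec r by (simp add: diff_eq_zero_iff)
  have "r \<otimes> e \<ominus> e \<otimes> r \<otimes> e = \<zero>"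
    using ec r idem_corner_mult(3,4)[OF e r] by (intro corner_zero) simp_all
  then have right: "r \<otimes> e = e \<otimes> r \<otimes> e" using ec r by (simp add: diff_eq_zero_iff)
  show "e \<otimes> r = r \<otimes> e" using trans[OF left right[symmetric]] .
qed

lemma idem_eq_central_idem_if_weak_cong:
  assumes e: "e \<in> Idems R" and g: "g \<in> Idems R" and "central R g"
    and free: "idempotent_free R I" and eg: "e \<ominus> g \<in> I \<or> e \<oplus> g \<in> I"
  shows "e = g"
proof -
  have ec: "e \<in> carrier R" and gc: "g \<in> carrier R" using e g by (simp_all add: Idems_def)
  have comm: "e \<otimes> g = g \<otimes> e" using \<open>central R g\<close> ec by (simp add: central_def)
  have zero: "p = \<zero>" if "p \<in> I" "p \<in> Idems R" for p
    using that free by (simp add: idempotent_free_def Idems_def)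
  have "e \<ominus> e \<otimes> g = \<zero>"
    using zero diff_mult_mem_if_weak_cong[OF ec g eg] idem_diff_mult_idem[OF e g comm] by blast
  then have e_eq: "e = e \<otimes> g" using ec gc by (simp add: diff_eq_zero_iff)
  have "g \<ominus> g \<otimes> e = \<zero>"
    using zero diff_mult_mem_if_weak_cong[OF gc e weak_cong_sym[OF ec gc eg]]
      idem_diff_mult_idem[OF g e comm[symmetric]] by blast
  then have "g = g \<otimes> e" using ec gc by (simp add: diff_eq_zero_iff)
  with e_eq comm show ?thesis by simp
qed

lemma semi_boolean_quotient_if_uniquely_weakly_clean:
  assumes "uniquely_weakly_clean R I"
  shows "semi_boolean (R Quot I)"
  unfolding semi_boolean_quotient_iff
proof
  fix x assume x: "x \<in> carrier R"
  then obtain e where e: "e \<in> Idems R" "x \<ominus> e \<in> I \<or> x \<oplus> e \<in> I"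
    using assms unfolding uniquely_weakly_clean_def by blast
  have ec: "e \<in> carrier R" and ee: "e \<otimes> e = e" using e(1) by (simp_all add: Idems_def)
  have "x \<otimes> x \<ominus> e \<in> I" using square_diff_mem_if_weak_cong[OF x ec e(2)] ee by simp
  then show "x \<otimes> x \<ominus> x \<in> I \<or> x \<otimes> x \<oplus> x \<in> I"
    using weak_cong_trans[OF _ x ec _ e(2)] x ec by blast
qed

lemma idempotent_free_if_lift_uniquely_weakly:
  assumes "idem_lift_uniquely_weakly R I"
  shows "idempotent_free R I"
  unfolding idempotent_free_def
proof (intro ballI impI)
  fix e assume e: "e \<in> I" "e \<otimes> e = e"
  have uniq: "\<exists>!f. f \<in> Idems R \<and> (\<zero> \<ominus> f \<in> I \<or> \<zero> \<oplus> f \<in> I)"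
    using assms unfolding idem_lift_uniquely_weakly_def by (simp add: a_minus_def)
  have "e \<in> Idems R" "\<zero> \<oplus> e \<in> I" using e Icarr by (simp_all add: Idems_def)
  moreover have "\<zero> \<in> Idems R" "\<zero> \<ominus> \<zero> \<in> I" by (simp_all add: Idems_def a_minus_def)
  ultimately show "e = \<zero>" using uniq by blast
qed

lemma abelian_if_lift_uniquely_weakly:
  assumes "semi_boolean (R Quot I)" and "idem_lift_uniquely_weakly R I"
  shows "abelian_ring R"
  unfolding abelian_ring_def
proof
  fix e assume e: "e \<in> Idems R"
  have ec: "e \<in> carrier R" and ee: "e \<otimes> e = e" using e by (simp_all add: Idems_def)
  have e_cong: "e \<ominus> e \<in> I" using ec by (simp add: a_minus_def r_neg)
  have "\<forall>x \<in> carrier R. x \<otimes> x \<ominus> x \<in> I \<longrightarrow> (\<exists>!f. f \<in> Idems R \<and> (x \<ominus> f \<in> I \<or> x \<oplus> f \<in> I))"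
    using assms(2) unfolding idem_lift_uniquely_weakly_def .
  moreover have "e \<otimes> e \<ominus> e \<in> I" using e_cong by (simp only: ee)
  ultimately have lifts: "\<exists>!f. f \<in> Idems R \<and> (e \<ominus> f \<in> I \<or> e \<oplus> f \<in> I)"
    using ec by blast
  have uniq: "f = e" if "f \<in> Idems R" "e \<ominus> f \<in> I" for f
    using lifts that e e_cong by blast
  have square_zero: "a \<in> I" if "a \<in> carrier R" "a \<otimes> a = \<zero>" for a
    using square_zero_mem_if_semi_boolean[OF _ that] assms(1) unfolding semi_boolean_quotient_iff .
  show "central R e" using central_if_unique_lift[OF e uniq square_zero] .
qed

lemma weak_lift_if_semi_boolean:
  assumes "semi_boolean (R Quot I)" and lift: "idem_lift_weakly R I" and a: "a \<in> carrier R"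
  shows "\<exists>e \<in> Idems R. a \<ominus> e \<in> I \<or> a \<oplus> e \<in> I"
proof -
  have "a \<otimes> a \<ominus> a \<in> I \<or> a \<otimes> a \<oplus> a \<in> I" using assms(1) a by (simp add: semi_boolean_quotient_iff)
  then show ?thesis
  proof
    assume "a \<otimes> a \<ominus> a \<in> I"
    then show ?thesis using lift a unfolding idem_lift_weakly_def by blast
  next
    assume "a \<otimes> a \<oplus> a \<in> I"
    moreover have "\<ominus> a \<otimes> \<ominus> a \<ominus> \<ominus> a = a \<otimes> a \<oplus> a" using a by algebra
    moreover have "\<ominus> a \<in> carrier R" using a by simp
    ultimately obtain e where "e \<in> Idems R" "\<ominus> a \<ominus> e \<in> I \<or> \<ominus> a \<oplus> e \<in> I"
      using lift unfolding idem_lift_weakly_def by metis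
    then show ?thesis using weak_cong_uminus a by (auto simp: Idems_def)
  qed
qed

lemma uniquely_weakly_clean_if_central_lifts:
  assumes lift: "\<forall>a \<in> carrier R. \<exists>e \<in> Idems R. central R e \<and> (a \<ominus> e \<in> I \<or> a \<oplus> e \<in> I)"
    and free: "idempotent_free R I"
  shows "uniquely_weakly_clean R I"
  unfolding uniquely_weakly_clean_def
proof
  fix x assume x: "x \<in> carrier R"
  then obtain g where g: "g \<in> Idems R" "central R g" "x \<ominus> g \<in> I \<or> x \<oplus> g \<in> I"
    using lift by blast
  have "f = g" if f: "f \<in> Idems R" "x \<ominus> f \<in> I \<or> x \<oplus> f \<in> I" for f
  proof -
    have fc: "f \<in> carrier R" and gc: "g \<in> carrier R" using f(1) g(1) by (simp_all add: Idems_def)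
    have "f \<ominus> g \<in> I \<or> f \<oplus> g \<in> I"
      using weak_cong_trans[OF fc gc x weak_cong_sym[OF x fc f(2)] weak_cong_sym[OF x gc g(3)]] .
    then show ?thesis using idem_eq_central_idem_if_weak_cong f(1) g(1,2) free by blast
  qed
  with g show "\<exists>!e. e \<in> Idems R \<and> (x \<ominus> e \<in> I \<or> x \<oplus> e \<in> I)" by blast
qed

end

theorem mainTheorem10:
  fixes R (structure) and I :: "'a set"
  assumes "ring R" and "ideal I R"
  shows "(uniquely_weakly_clean R I
          \<longleftrightarrow> semi_boolean (R Quot I) \<and> idem_lift_uniquely_weakly R I)
       \<and> (semi_boolean (R Quot I) \<and> idem_lift_uniquely_weakly R I
          \<longleftrightarrow> semi_boolean (R Quot I) \<and> idem_lift_weakly R I \<and> abelian_ring R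
              \<and> idempotent_free R I)
       \<and> (semi_boolean (R Quot I) \<and> idem_lift_weakly R I \<and> abelian_ring R \<and> idempotent_free R I
          \<longleftrightarrow> (\<forall>a \<in> carrier R. \<exists>e \<in> Idems R. central R e \<and> (a \<ominus> e \<in> I \<or> a \<oplus> e \<in> I))
              \<and> idempotent_free R I)"
proof -
  interpret ideal I R by (fact assms(2))
  have lift_unique: "idem_lift_uniquely_weakly R I" if "uniquely_weakly_clean R I"
    using that unfolding uniquely_weakly_clean_def idem_lift_uniquely_weakly_def by blast
  have lift: "idem_lift_weakly R I" if "idem_lift_uniquely_weakly R I"
    using that unfolding idem_lift_uniquely_weakly_def idem_lift_weakly_def by blast
  have central_lifts: "\<forall>a \<in> carrier R. \<exists>e \<in> Idems R. central R e \<and> (a \<ominus> e \<in> I \<or> a \<oplus> e \<in> I)"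
    if "semi_boolean (R Quot I)" "idem_lift_weakly R I" "abelian_ring R"
    using weak_lift_if_semi_boolean[OF that(1,2)] that(3) unfolding abelian_ring_def by blast
  show ?thesis
    using semi_boolean_quotient_if_uniquely_weakly_clean lift_unique
      abelian_if_lift_uniquely_weakly idempotent_free_if_lift_uniquely_weakly lift
      central_lifts uniquely_weakly_clean_if_central_lifts
    by blast
qed

end
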